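(* Let $(\Omega,\mathcal{F},\mathbb{P})$ be a nonatomic probability space, let $1\le q<\infty$, let $u(x)=-|x|^q$ for $x<0$ and $u(x)=0$ for $x\ge0$, let $\alpha<0$, and set $\mathcal{A}_u^\infty=\{X\in L^\infty:\mathbb{E}[u(X)]\ge\alpha\}$. Let $S=(S_0,S_T)$ be a traded asset with $S_T\in L^\infty$ and assume $\rho_{\mathcal{A}_u^\infty,S}$ is finite-valued on $L^\infty$. Then $\mathrm{Index}_{\mathrm{fin}}(\rho_{\mathcal{A}_u^\infty,S})=q$ and the infimum defining the index is attained.
   Context: A traded asset is $S=(S_0,S_T)$ with $S_0>0$, $S_T\ge0$ a.s., $S_T\ne0$. For $\mathcal{B}\subset L^\infty$, $\rho_{\mathcal{B},S}(X)=\inf\{m\in\mathbb{R}:X+\frac{m}{S_0}S_T\in\mathcal{B}\}$. For a convex, law-invariant acceptance set $\mathcal{A}\subset L^\infty$ with $\rho_{\mathcal{A},S}$ finite-valued on $L^\infty$, $\mathrm{Index}_{\mathrm{fin}}(\rho_{\mathcal{A},S})=\inf\{p\in[1,\infty):\text{the closure of }\mathcal{A}\text{ in }L^p\text{ has nonempty interior in }L^p\}$, with $\inf\emptyset=\infty$; the index is attained if this infimum belongs to the set. *)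

theory Defs
  imports "HOL-Probability.Probability"
begin

definition nonatomic :: "'a measure \<Rightarrow> bool" where
  "nonatomic M \<longleftrightarrow> (\<forall>A\<in>sets M. measure M A > 0 \<longrightarrow>
     (\<exists>B\<in>sets M. B \<subseteq> A \<and> 0 < measure M B \<and> measure M B < measure M A))"

definition Linf :: "'a measure \<Rightarrow> ('a \<Rightarrow> real) set" where
  "Linf M = {X. X \<in> borel_measurable M \<and> (\<exists>C. AE \<omega> in M. \<bar>X \<omega>\<bar> \<le> C)}"

definition memLp :: "'a measure \<Rightarrow> real \<Rightarrow> ('a \<Rightarrow> real) \<Rightarrow> bool" where
  "memLp M p X \<longleftrightarrow> X \<in> borel_measurable M \<and> integrable M (\<lambda>\<omega>. \<bar>X \<omega>\<bar> powr p)"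

definition Lp_norm :: "'a measure \<Rightarrow> real \<Rightarrow> ('a \<Rightarrow> real) \<Rightarrow> real" where
  "Lp_norm M p X = (\<integral>\<omega>. \<bar>X \<omega>\<bar> powr p \<partial>M) powr (1 / p)"

definition Lp_closure :: "'a measure \<Rightarrow> real \<Rightarrow> ('a \<Rightarrow> real) set \<Rightarrow> ('a \<Rightarrow> real) set" where
  "Lp_closure M p A = {X. memLp M p X \<and> (\<exists>Xs. (\<forall>n. Xs n \<in> A) \<and>
       (\<lambda>n. Lp_norm M p (\<lambda>\<omega>. Xs n \<omega> - X \<omega>)) \<longlonglongrightarrow> 0)}"

definition Lp_interior_nonempty :: "'a measure \<Rightarrow> real \<Rightarrow> ('a \<Rightarrow> real) set \<Rightarrow> bool" where
  "Lp_interior_nonempty M p B \<longleftrightarrow> (\<exists>X\<in>B. memLp M p X \<and> (\<exists>\<epsilon>>0. \<forall>Y. memLp M p Y \<and>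
       Lp_norm M p (\<lambda>\<omega>. Y \<omega> - X \<omega>) < \<epsilon> \<longrightarrow> Y \<in> B))"

definition index_set :: "'a measure \<Rightarrow> ('a \<Rightarrow> real) set \<Rightarrow> real set" where
  "index_set M A = {p. 1 \<le> p \<and> Lp_interior_nonempty M p (Lp_closure M p A)}"

text \<open>Index_fin, valued in the extended reals so that Inf of the empty set is infinity.\<close>
definition index_fin :: "'a measure \<Rightarrow> ('a \<Rightarrow> real) set \<Rightarrow> ereal" where
  "index_fin M A = Inf (ereal ` index_set M A)"

definition rho_set :: "'a measure \<Rightarrow> ('a \<Rightarrow> real) set \<Rightarrow> real \<Rightarrow> ('a \<Rightarrow> real) \<Rightarrow> ('a \<Rightarrow> real) \<Rightarrow> real set" where
  "rho_set M B S0 ST X = {m. (\<lambda>\<omega>. X \<omega> + m / S0 * ST \<omega>) \<in> B}"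

definition rho :: "'a measure \<Rightarrow> ('a \<Rightarrow> real) set \<Rightarrow> real \<Rightarrow> ('a \<Rightarrow> real) \<Rightarrow> ('a \<Rightarrow> real) \<Rightarrow> real" where
  "rho M B S0 ST X = Inf (rho_set M B S0 ST X)"

text \<open>rho is finite-valued on L-infinity: for every X the defining set is nonempty
  and bounded below (so the infimum is a real number, not +-infinity).\<close>
definition rho_finite :: "'a measure \<Rightarrow> ('a \<Rightarrow> real) set \<Rightarrow> real \<Rightarrow> ('a \<Rightarrow> real) \<Rightarrow> bool" where
  "rho_finite M B S0 ST \<longleftrightarrow> (\<forall>X\<in>Linf M. rho_set M B S0 ST X \<noteq> {} \<and> bdd_below (rho_set M B S0 ST X))"

definition traded_asset :: "'a measure \<Rightarrow> real \<Rightarrow> ('a \<Rightarrow> real) \<Rightarrow> bool" where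
  "traded_asset M S0 ST \<longleftrightarrow> S0 > 0 \<and> ST \<in> borel_measurable M \<and> (AE \<omega> in M. ST \<omega> \<ge> 0)
     \<and> \<not> (AE \<omega> in M. ST \<omega> = 0)"

definition u_q :: "real \<Rightarrow> real \<Rightarrow> real" where
  "u_q q x = (if x < 0 then - (\<bar>x\<bar> powr q) else 0)"

definition A_u :: "'a measure \<Rightarrow> real \<Rightarrow> real \<Rightarrow> ('a \<Rightarrow> real) set" where
  "A_u M q \<alpha> = {X. X \<in> Linf M \<and> (\<integral>\<omega>. u_q q (X \<omega>) \<partial>M) \<ge> \<alpha>}"

end

theory Submission
  imports Defs
begin

text \<open>
  For \<open>p = q\<close> the zero variable is an \<open>L\<^sup>q\<close>-interior point of the closure of the acceptance
  set: every \<open>Y\<close> with \<open>E |Y|^q \<le> -\<alpha>\<close> is the \<open>L\<^sup>q\<close>-limit of its truncations, and these are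
  acceptable because \<open>u(x) \<ge> -|x|^q\<close>.
  For \<open>p < q\<close>, Fatou's lemma along an a.e. convergent subsequence shows that every \<open>Y\<close> in the
  \<open>L\<^sup>p\<close>-closure still satisfies \<open>E (max 0 (-Y))^q \<le> -\<alpha>\<close>. On the other hand nonatomicity lets us
  subtract from any \<open>X \<in> L\<^sup>p\<close> a nonnegative step function \<open>Z\<close>, supported where \<open>X\<close> is bounded
  above, with arbitrarily small \<open>L\<^sup>p\<close>-norm but infinite \<open>q\<close>-th moment: height \<open>P(D\<^sub>n)^(-1/q)\<close> on
  disjoint sets \<open>D\<^sub>n\<close> of geometrically decreasing probability. Hence no \<open>L\<^sup>p\<close>-ball lies in the
  closure.
\<close>

lemma powr_abs_diff_le:
  fixes a b p :: real
  assumes "0 \<le> p"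
  shows "\<bar>a - b\<bar> powr p \<le> 2 powr p * (\<bar>a\<bar> powr p + \<bar>b\<bar> powr p)"
proof -
  have "\<bar>a - b\<bar> powr p \<le> (2 * max \<bar>a\<bar> \<bar>b\<bar>) powr p"
    using assms by (intro powr_mono2) auto
  also have "\<dots> = 2 powr p * max \<bar>a\<bar> \<bar>b\<bar> powr p"
    by (simp add: powr_mult)
  also have "max \<bar>a\<bar> \<bar>b\<bar> powr p \<le> \<bar>a\<bar> powr p + \<bar>b\<bar> powr p"
    by (cases "\<bar>a\<bar> \<le> \<bar>b\<bar>") (auto simp: max_def)
  finally show ?thesis by simp
qed

lemma memLp_Linf:
  assumes "finite_measure M" "X \<in> Linf M" "0 \<le> p"
  shows "memLp M p X"
proof -
  interpret finite_measure M by fact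
  obtain C where [measurable]: "X \<in> borel_measurable M" and C: "AE \<omega> in M. \<bar>X \<omega>\<bar> \<le> C"
    using assms(2) unfolding Linf_def by auto
  have "integrable M (\<lambda>\<omega>. \<bar>X \<omega>\<bar> powr p)"
  proof (rule integrable_const_bound[where B="\<bar>C\<bar> powr p"])
    show "AE \<omega> in M. norm (\<bar>X \<omega>\<bar> powr p) \<le> \<bar>C\<bar> powr p"
      using C by eventually_elim (use assms(3) in \<open>auto intro!: powr_mono2\<close>)
  qed measurable
  then show ?thesis by (simp add: memLp_def)
qed

lemma memLp_diff:
  assumes "0 \<le> p" "memLp M p X" "memLp M p Y"
  shows "memLp M p (\<lambda>\<omega>. X \<omega> - Y \<omega>)"
proof -
  have [measurable]: "X \<in> borel_measurable M" "Y \<in> borel_measurable M"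
    and "integrable M (\<lambda>\<omega>. \<bar>X \<omega>\<bar> powr p)" "integrable M (\<lambda>\<omega>. \<bar>Y \<omega>\<bar> powr p)"
    using assms by (auto simp: memLp_def)
  then have "integrable M (\<lambda>\<omega>. 2 powr p * (\<bar>X \<omega>\<bar> powr p + \<bar>Y \<omega>\<bar> powr p))"
    by auto
  then have "integrable M (\<lambda>\<omega>. \<bar>X \<omega> - Y \<omega>\<bar> powr p)"
    by (rule Bochner_Integration.integrable_bound)
      (use powr_abs_diff_le[OF assms(1)] in \<open>auto intro!: AE_I2\<close>)
  then show ?thesis by (simp add: memLp_def)
qed

lemma Lp_norm_less_iff:
  assumes "0 < p" "0 < \<epsilon>"
  shows "Lp_norm M p X < \<epsilon> \<longleftrightarrow> (\<integral>\<omega>. \<bar>X \<omega>\<bar> powr p \<partial>M) < \<epsilon> powr p"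
proof -
  define I where "I = (\<integral>\<omega>. \<bar>X \<omega>\<bar> powr p \<partial>M)"
  have "0 \<le> I" unfolding I_def by (intro integral_nonneg_AE) auto
  have "I powr (1/p) < \<epsilon> \<longleftrightarrow> I < \<epsilon> powr p"
  proof
    assume "I powr (1/p) < \<epsilon>"
    then show "I < \<epsilon> powr p"
      using powr_mono2[of "1/p" "\<epsilon> powr p" I] assms by (force simp: powr_powr)
  next
    assume "I < \<epsilon> powr p"
    then show "I powr (1/p) < \<epsilon>"
      using powr_less_mono2[of "1/p" I "\<epsilon> powr p"] \<open>0 \<le> I\<close> assms by (simp add: powr_powr)
  qed
  then show ?thesis by (simp add: Lp_norm_def I_def[abs_def])
qed

lemma Lp_norm_tendsto_zero_iff:
  assumes "0 < p"
  shows "(\<lambda>n. Lp_norm M p (X n)) \<longlonglongrightarrow> 0 \<longleftrightarrow> (\<lambda>n. \<integral>\<omega>. \<bar>X n \<omega>\<bar> powr p \<partial>M) \<longlonglongrightarrow> 0"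
proof -
  define I where "I n = (\<integral>\<omega>. \<bar>X n \<omega>\<bar> powr p \<partial>M)" for n
  have I0: "0 \<le> I n" for n unfolding I_def by (intro integral_nonneg_AE) auto
  have "(\<lambda>n. I n powr (1/p)) \<longlonglongrightarrow> 0 \<longleftrightarrow> I \<longlonglongrightarrow> 0"
  proof
    assume "(\<lambda>n. I n powr (1/p)) \<longlonglongrightarrow> 0"
    then have "(\<lambda>n. (I n powr (1/p)) powr p) \<longlonglongrightarrow> 0"
      by (rule tendsto_zero_powrI) (use assms in auto)
    then show "I \<longlonglongrightarrow> 0" using I0 assms by (simp add: powr_powr)
  qed (rule tendsto_zero_powrI[where b="1/p"], use assms I0 in auto)
  then show ?thesis by (simp add: Lp_norm_def I_def[abs_def])
qed

lemma tendsto_Lp_truncation: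
  assumes "0 < p" "memLp M p Y"
  shows "(\<lambda>n. Lp_norm M p (\<lambda>\<omega>. max (- real n) (min (real n) (Y \<omega>)) - Y \<omega>)) \<longlonglongrightarrow> 0"
proof -
  have [measurable]: "Y \<in> borel_measurable M" and iY: "integrable M (\<lambda>\<omega>. \<bar>Y \<omega>\<bar> powr p)"
    using assms(2) by (auto simp: memLp_def)
  have "(\<lambda>n. \<integral>\<omega>. \<bar>max (- real n) (min (real n) (Y \<omega>)) - Y \<omega>\<bar> powr p \<partial>M) \<longlonglongrightarrow> (\<integral>\<omega>. 0 \<partial>M)"
  proof (rule integral_dominated_convergence[where w="\<lambda>\<omega>. \<bar>Y \<omega>\<bar> powr p"])
    show "AE \<omega> in M. (\<lambda>n. \<bar>max (- real n) (min (real n) (Y \<omega>)) - Y \<omega>\<bar> powr p) \<longlonglongrightarrow> 0"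
    proof (rule AE_I2)
      fix \<omega>
      obtain N :: nat where "\<bar>Y \<omega>\<bar> \<le> real N" using real_arch_simple by blast
      then have "\<forall>n\<ge>N. \<bar>max (- real n) (min (real n) (Y \<omega>)) - Y \<omega>\<bar> powr p = 0" by auto
      then show "(\<lambda>n. \<bar>max (- real n) (min (real n) (Y \<omega>)) - Y \<omega>\<bar> powr p) \<longlonglongrightarrow> 0"
        by (intro tendsto_eventually) (auto simp: eventually_sequentially)
    qed
    show "AE \<omega> in M. norm (\<bar>max (- real n) (min (real n) (Y \<omega>)) - Y \<omega>\<bar> powr p) \<le> \<bar>Y \<omega>\<bar> powr p" for n
      using assms(1) by (intro AE_I2) (auto intro!: powr_mono2)
  qed (use iY in measurable)
  then show ?thesis by (simp add: Lp_norm_tendsto_zero_iff[OF assms(1)])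
qed

lemma u_q_measurable[measurable]:
  assumes [measurable]: "X \<in> borel_measurable M"
  shows "(\<lambda>\<omega>. u_q q (X \<omega>)) \<in> borel_measurable M"
  unfolding u_q_def by measurable

lemma u_q_nonpos: "u_q q x \<le> 0"
  unfolding u_q_def by auto

lemma minus_u_q_eq: "- u_q q x = max 0 (- x) powr q"
  unfolding u_q_def by auto

lemma u_q_ge_minus_powr:
  assumes "0 \<le> q" "\<bar>x\<bar> \<le> \<bar>y\<bar>"
  shows "- (\<bar>y\<bar> powr q) \<le> u_q q x"
  using assms unfolding u_q_def by (auto intro!: powr_mono2)

lemma tendsto_u_q:
  assumes "(f \<longlongrightarrow> x) F" "0 < q"
  shows "((\<lambda>n. u_q q (f n)) \<longlongrightarrow> u_q q x) F"
proof -
  have "((\<lambda>n. max 0 (- f n) powr q) \<longlongrightarrow> max 0 (- x) powr q) F"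
    by (rule tendsto_powr2) (use assms in \<open>auto intro!: tendsto_intros\<close>)
  then have "((\<lambda>n. - u_q q (f n)) \<longlongrightarrow> - u_q q x) F"
    by (simp only: minus_u_q_eq)
  then show ?thesis by (simp add: tendsto_minus_cancel_left)
qed

lemma integrable_u_q_Linf:
  assumes "finite_measure M" "X \<in> Linf M" "0 \<le> q"
  shows "integrable M (\<lambda>\<omega>. u_q q (X \<omega>))"
proof (rule Bochner_Integration.integrable_bound)
  show "integrable M (\<lambda>\<omega>. \<bar>X \<omega>\<bar> powr q)"
    using memLp_Linf[OF assms] by (simp add: memLp_def)
  show "AE \<omega> in M. norm (u_q q (X \<omega>)) \<le> norm (\<bar>X \<omega>\<bar> powr q)"
  proof (rule AE_I2)
    fix \<omega>
    show "norm (u_q q (X \<omega>)) \<le> norm (\<bar>X \<omega>\<bar> powr q)"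
      using u_q_ge_minus_powr[OF assms(3) order.refl, of "X \<omega>"] u_q_nonpos[of q "X \<omega>"] by auto
  qed
qed (use assms(2) in \<open>auto simp: Linf_def\<close>)

lemma Lp_closure_A_u_of_moment_le:
  assumes "prob_space M" "0 < q" "memLp M q Y" "(\<integral>\<omega>. \<bar>Y \<omega>\<bar> powr q \<partial>M) \<le> - \<alpha>"
  shows "Y \<in> Lp_closure M q (A_u M q \<alpha>)"
proof -
  interpret prob_space M by fact
  have [measurable]: "Y \<in> borel_measurable M" and iY: "integrable M (\<lambda>\<omega>. \<bar>Y \<omega>\<bar> powr q)"
    using assms(3) by (auto simp: memLp_def)
  define T where "T n \<omega> = max (- real n) (min (real n) (Y \<omega>))" for n \<omega>
  have T_Linf: "T n \<in> Linf M" for n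
    unfolding Linf_def T_def by (auto intro!: exI[of _ "real n"])
  have "T n \<in> A_u M q \<alpha>" for n
  proof -
    have "- \<alpha> \<ge> (\<integral>\<omega>. \<bar>Y \<omega>\<bar> powr q \<partial>M)" by fact
    also have "(\<integral>\<omega>. \<bar>Y \<omega>\<bar> powr q \<partial>M) \<ge> (\<integral>\<omega>. - u_q q (T n \<omega>) \<partial>M)"
    proof (rule integral_mono)
      fix \<omega>
      have "\<bar>T n \<omega>\<bar> \<le> \<bar>Y \<omega>\<bar>" by (auto simp: T_def)
      then show "- u_q q (T n \<omega>) \<le> \<bar>Y \<omega>\<bar> powr q"
        using u_q_ge_minus_powr[of q "T n \<omega>" "Y \<omega>"] assms(2) by linarith
    qed (use integrable_u_q_Linf[OF finite_measure_axioms T_Linf] assms(2) iY in auto)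
    finally show ?thesis using T_Linf by (auto simp: A_u_def)
  qed
  then show ?thesis
    using assms(3) tendsto_Lp_truncation[OF assms(2,3)] unfolding Lp_closure_def
    by (intro CollectI conjI exI[of _ T]) (simp_all add: T_def)
qed

lemma index_set_A_u_mem:
  assumes "prob_space M" "1 \<le> q" "\<alpha> < 0"
  shows "q \<in> index_set M (A_u M q \<alpha>)"
proof -
  interpret prob_space M by fact
  have q0: "0 < q" using assms(2) by simp
  define \<epsilon> where "\<epsilon> = (- \<alpha>) powr (1/q)"
  have "0 < \<epsilon>" using assms(3) by (simp add: \<epsilon>_def)
  have \<epsilon>_powr: "\<epsilon> powr q = - \<alpha>" using q0 assms(3) by (simp add: \<epsilon>_def powr_powr)
  have zero: "memLp M q (\<lambda>\<omega>. 0)" using q0 by (simp add: memLp_def)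
  have "Y \<in> Lp_closure M q (A_u M q \<alpha>)"
    if "memLp M q Y" "Lp_norm M q (\<lambda>\<omega>. Y \<omega> - 0) < \<epsilon>" for Y
    using that Lp_closure_A_u_of_moment_le[OF assms(1) q0, of Y \<alpha>]
    by (simp add: Lp_norm_less_iff[OF q0 \<open>0 < \<epsilon>\<close>] \<epsilon>_powr)
  moreover have "(\<lambda>\<omega>. 0) \<in> Lp_closure M q (A_u M q \<alpha>)"
    using Lp_closure_A_u_of_moment_le[OF assms(1) q0 zero] assms(3) by simp
  ultimately show ?thesis
    unfolding index_set_def Lp_interior_nonempty_def using assms(2) zero \<open>0 < \<epsilon>\<close> by blast
qed

lemma nonatomic_halving_subset:
  assumes "finite_measure M" "nonatomic M" "A \<in> sets M" "0 < measure M A"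
  obtains B where "B \<in> sets M" "B \<subseteq> A" "0 < measure M B" "measure M B \<le> measure M A / 2"
proof -
  interpret finite_measure M by fact
  obtain B where B: "B \<in> sets M" "B \<subseteq> A" "0 < measure M B" "measure M B < measure M A"
    using assms(2-4) unfolding nonatomic_def by blast
  have "measure M (A - B) = measure M A - measure M B"
    using B assms(3) by (intro finite_measure_Diff) auto
  then show thesis
    using that[of B] that[of "A - B"] B assms(3) by (cases "measure M B \<le> measure M A / 2") auto
qed

lemma nonatomic_halving_chain:
  assumes "finite_measure M" "nonatomic M" "F \<in> sets M" "0 < measure M F"
  obtains E where "E 0 = F" "\<And>n. E n \<in> sets M" "decseq E" "\<And>n. 0 < measure M (E n)"
    "\<And>n. measure M (E (Suc n)) \<le> measure M (E n) / 2"
proof -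
  let ?P = "\<lambda>(n::nat) A. A \<in> sets M \<and> 0 < measure M A \<and> (n = 0 \<longrightarrow> A = F)"
  let ?Q = "\<lambda>(n::nat) A B. B \<subseteq> A \<and> measure M B \<le> measure M A / 2"
  have "\<exists>E. \<forall>n. ?P n (E n) \<and> ?Q n (E n) (E (Suc n))"
  proof (rule dependent_nat_choice)
    fix A n assume "?P n A"
    then obtain B where "B \<in> sets M" "B \<subseteq> A" "0 < measure M B" "measure M B \<le> measure M A / 2"
      using nonatomic_halving_subset[OF assms(1,2)] by blast
    then show "\<exists>B. ?P (Suc n) B \<and> ?Q n A B" by blast
  qed (use assms in auto)
  then show thesis using that by (auto intro: decseq_SucI)
qed

lemma disjoint_family_decseq_Diff:
  assumes "decseq E"
  shows "disjoint_family (\<lambda>n. E n - E (Suc n))"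
  unfolding disjoint_family_on_def
proof (intro ballI impI)
  fix m n :: nat assume "m \<noteq> n"
  then have "E (max m n) \<subseteq> E (Suc (min m n))" by (intro decseqD[OF assms]) auto
  then show "(E m - E (Suc m)) \<inter> (E n - E (Suc n)) = {}" by (auto simp: max_def min_def split: if_splits)
qed

lemma nonatomic_disjoint_family:
  assumes "finite_measure M" "nonatomic M" "F \<in> sets M" "0 < measure M F" "0 < c"
  obtains D where "disjoint_family D"
    "\<And>n. D n \<in> sets M" "\<And>n. D n \<subseteq> F" "\<And>n. 0 < measure M (D n)"
    "\<And>n. measure M (D n) \<le> c * (1/2)^n"
proof -
  interpret finite_measure M by fact
  obtain E where E0: "E 0 = F" and E_sets: "\<And>n. E n \<in> sets M" and E_dec: "decseq E"
    and E_pos: "\<And>n. 0 < measure M (E n)" and E_half: "\<And>n. measure M (E (Suc n)) \<le> measure M (E n) / 2"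
    by (rule nonatomic_halving_chain[OF assms(1-4)]) blast
  have E_le: "measure M (E n) \<le> measure M F * (1/2)^n" for n
    using E_half by (induction n) (auto simp: E0 intro: order_trans)
  have "(\<lambda>N. measure M F * (1/2::real)^N) \<longlonglongrightarrow> 0"
    by (intro tendsto_mult_right_zero LIMSEQ_power_zero) simp
  then have "\<forall>\<^sub>F N in sequentially. measure M F * (1/2)^N < c"
    using assms(5) by (rule order_tendstoD(2))
  then obtain N where N: "measure M F * (1/2)^N \<le> c"
    by (auto simp: eventually_sequentially intro: less_imp_le)
  define D where "D n = E (n + N) - E (Suc (n + N))" for n
  show thesis
  proof (rule that)
    show "disjoint_family D"
      using disjoint_family_decseq_Diff[of "\<lambda>n. E (n + N)"] E_dec by (simp add: decseq_def D_def[abs_def])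
    fix n
    show "D n \<in> sets M" using E_sets by (simp add: D_def)
    show "D n \<subseteq> F" using decseqD[OF E_dec, of 0 "n + N"] by (auto simp: D_def E0)
    have D_measure: "measure M (D n) = measure M (E (n + N)) - measure M (E (Suc (n + N)))"
      unfolding D_def using E_sets decseqD[OF E_dec, of "n + N" "Suc (n + N)"]
      by (intro finite_measure_Diff) auto
    then show "0 < measure M (D n)"
      using E_pos[of "n + N"] E_half[of "n + N"] by simp
    have "measure M (E (n + N)) \<le> (1/2)^n * (measure M F * (1/2)^N)"
      using E_le[of "n + N"] by (simp add: power_add mult_ac)
    also have "\<dots> \<le> (1/2)^n * c" using N by (intro mult_left_mono) auto
    finally have "measure M (E (n + N)) \<le> c * (1/2)^n" by (simp add: mult.commute)
    then show "measure M (D n) \<le> c * (1/2)^n"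
      using D_measure measure_nonneg[of M "E (Suc (n + N))"] by linarith
  qed
qed

lemma suminf_indicator_disjoint_family:
  fixes f :: "nat \<Rightarrow> 'b::{semiring_1, t2_space, topological_comm_monoid_add}"
  assumes "disjoint_family D" "\<omega> \<in> D k"
  shows "(\<Sum>n. f n * indicator (D n) \<omega>) = f k"
proof -
  have "f n * indicator (D n) \<omega> = (if n = k then f n else 0)" for n
    using assms unfolding disjoint_family_on_def by (cases "n = k") (auto simp: indicator_def)
  then show ?thesis by (simp add: sums_unique[OF sums_single, symmetric])
qed

lemma suminf_indicator_disjoint_family_cases:
  fixes a :: "nat \<Rightarrow> real"
  assumes "disjoint_family D"
  shows "(\<Sum>n. a n * indicator (D n) \<omega>) = 0 \<or> (\<exists>k. \<omega> \<in> D k \<and> (\<Sum>n. a n * indicator (D n) \<omega>) = a k)"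
proof (cases "\<omega> \<in> \<Union>(range D)")
  case True
  then obtain k where "\<omega> \<in> D k" by blast
  then show ?thesis using suminf_indicator_disjoint_family[OF assms, of \<omega> k a] by blast
qed auto

lemma comp_suminf_indicator_disjoint_family:
  fixes a :: "nat \<Rightarrow> real" and h :: "real \<Rightarrow> 'b::{semiring_1, t2_space, topological_comm_monoid_add}"
  assumes "disjoint_family D" "h 0 = 0"
  shows "h (\<Sum>n. a n * indicator (D n) \<omega>) = (\<Sum>n. h (a n) * indicator (D n) \<omega>)"
proof (cases "\<omega> \<in> \<Union>(range D)")
  case True
  then obtain k where "\<omega> \<in> D k" by blast
  then show ?thesis using assms(1) by (simp add: suminf_indicator_disjoint_family)
qed (use assms(2) in auto)

lemma nn_integral_step_function:
  fixes a :: "nat \<Rightarrow> real"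
  assumes "disjoint_family D" "\<And>n. D n \<in> sets M" "h 0 = 0"
  shows "(\<integral>\<^sup>+\<omega>. ennreal (h (\<Sum>n. a n * indicator (D n) \<omega>)) \<partial>M)
    = (\<Sum>n. ennreal (h (a n)) * emeasure M (D n))"
proof -
  have "(\<integral>\<^sup>+\<omega>. ennreal (h (\<Sum>n. a n * indicator (D n) \<omega>)) \<partial>M)
      = (\<integral>\<^sup>+\<omega>. (\<Sum>n. ennreal (h (a n)) * indicator (D n) \<omega>) \<partial>M)"
    using comp_suminf_indicator_disjoint_family[OF assms(1), of "\<lambda>x. ennreal (h x)"] assms(3) by simp
  also have "\<dots> = (\<Sum>n. \<integral>\<^sup>+\<omega>. ennreal (h (a n)) * indicator (D n) \<omega> \<partial>M)"
    by (rule nn_integral_suminf) (use assms(2) in measurable)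
  also have "\<dots> = (\<Sum>n. ennreal (h (a n)) * emeasure M (D n))"
    using assms(2) by (simp add: nn_integral_cmult_indicator)
  finally show ?thesis .
qed

lemma nn_integral_powr_step_function:
  assumes "disjoint_family D" "\<And>n. D n \<in> sets M" "\<And>n. 0 < measure M (D n)"
  shows "(\<integral>\<^sup>+\<omega>. ennreal ((\<Sum>n. measure M (D n) powr (-1/q) * indicator (D n) \<omega>) powr s) \<partial>M)
    = (\<Sum>n. ennreal (measure M (D n) powr (1 - s/q)))"
proof -
  have "ennreal ((measure M (D n) powr (-1/q)) powr s) * emeasure M (D n)
      = ennreal (measure M (D n) powr (1 - s/q))" for n
  proof -
    let ?m = "measure M (D n)"
    have "emeasure M (D n) = ennreal ?m"
      using assms(3)[of n] by (intro emeasure_eq_ennreal_measure) (auto simp: measure_def)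
    moreover have "(?m powr (-1/q)) powr s * ?m = ?m powr (1 - s/q)"
      using assms(3)[of n] powr_add[of ?m "-(s/q)" 1] by (simp add: powr_powr)
    ultimately show ?thesis using assms(3)[of n] by (simp add: ennreal_mult[symmetric])
  qed
  then show ?thesis
    by (simp add: nn_integral_step_function[OF assms(1,2), of "\<lambda>x. x powr s"])
qed

lemma suminf_powr_le_geometric:
  fixes m :: "nat \<Rightarrow> real"
  assumes "0 < r" "\<And>n. 0 \<le> m n" "\<And>n. m n \<le> c * (1/2)^n"
  shows "(\<Sum>n. ennreal (m n powr r)) \<le> ennreal (c powr r / (1 - (1/2) powr r))"
proof -
  define \<beta> :: real where "\<beta> = (1/2) powr r"
  have "0 < \<beta>" "\<beta> < 1"
    using assms(1) powr_less_mono'[of "1/2::real" 0 r] by (auto simp: \<beta>_def)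
  have "0 \<le> c" using assms(2,3)[of 0] by simp
  have "(\<Sum>n. ennreal (m n powr r)) \<le> (\<Sum>n. ennreal (c powr r * \<beta> ^ n))"
  proof (rule suminf_le)
    fix n
    have "m n powr r \<le> (c * (1/2)^n) powr r" using assms by (intro powr_mono2) auto
    also have "\<dots> = c powr r * \<beta> ^ n"
      using \<open>0 \<le> c\<close> by (simp add: powr_mult \<beta>_def powr_realpow[symmetric] powr_powr mult.commute)
    finally show "ennreal (m n powr r) \<le> ennreal (c powr r * \<beta> ^ n)" by (rule ennreal_leI)
  qed (auto intro: summableI)
  also have "(\<Sum>n. ennreal (c powr r * \<beta> ^ n)) = ennreal (c powr r / (1 - \<beta>))"
    by (rule suminf_ennreal_eq)
      (use \<open>0 < \<beta>\<close> \<open>\<beta> < 1\<close> sums_mult[OF geometric_sums[of \<beta>], of "c powr r"] in \<open>auto simp: field_simps\<close>)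
  finally show ?thesis by (simp add: \<beta>_def)
qed

lemma step_function_small_Lp_infinite_Lq:
  fixes M :: "'a measure" and D :: "nat \<Rightarrow> 'a set" and q :: real
  defines "Z \<equiv> \<lambda>\<omega>. \<Sum>n. measure M (D n) powr (-1/q) * indicator (D n) \<omega>"
  assumes D: "disjoint_family D" and D_sets: "\<And>n. D n \<in> sets M"
    and D_pos: "\<And>n. 0 < measure M (D n)" and D_le: "\<And>n. measure M (D n) \<le> c * (1/2)^n"
    and "0 < p" "p < q"
  shows "Z \<in> borel_measurable M" "\<And>\<omega>. 0 \<le> Z \<omega>"
    "\<And>\<omega>. Z \<omega> \<noteq> 0 \<Longrightarrow> (\<exists>n. \<omega> \<in> D n) \<and> c powr (-1/q) \<le> Z \<omega>"
    "(\<integral>\<^sup>+\<omega>. ennreal (Z \<omega> powr p) \<partial>M) \<le> ennreal (c powr (1 - p/q) / (1 - (1/2) powr (1 - p/q)))"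
    "(\<integral>\<^sup>+\<omega>. ennreal (Z \<omega> powr q) \<partial>M) = top"
proof -
  have "0 < q" using assms(6,7) by simp
  have "0 < c" using D_pos[of 0] D_le[of 0] by simp
  show "Z \<in> borel_measurable M" unfolding Z_def using D_sets by measurable
  have height_ge: "c powr (-1/q) \<le> measure M (D n) powr (-1/q)" for n
  proof -
    have "c * (1/2)^n \<le> c * 1" using \<open>0 < c\<close> by (intro mult_left_mono) (auto simp: power_le_one)
    then show ?thesis
      using D_pos[of n] D_le[of n] \<open>0 < q\<close> by (intro powr_mono2') auto
  qed
  have Z_cases: "Z \<omega> = 0 \<or> (\<exists>k. \<omega> \<in> D k \<and> Z \<omega> = measure M (D k) powr (-1/q))" for \<omega>
    unfolding Z_def by (rule suminf_indicator_disjoint_family_cases[OF D])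
  show "0 \<le> Z \<omega>" for \<omega> using Z_cases[of \<omega>] by auto
  show "(\<exists>n. \<omega> \<in> D n) \<and> c powr (-1/q) \<le> Z \<omega>" if nonzero: "Z \<omega> \<noteq> 0" for \<omega>
  proof -
    obtain k where "\<omega> \<in> D k" "Z \<omega> = measure M (D k) powr (-1/q)" using Z_cases nonzero by blast
    then show ?thesis using height_ge[of k] by auto
  qed
  show "(\<integral>\<^sup>+\<omega>. ennreal (Z \<omega> powr p) \<partial>M) \<le> ennreal (c powr (1 - p/q) / (1 - (1/2) powr (1 - p/q)))"
    unfolding Z_def nn_integral_powr_step_function[OF D D_sets D_pos]
    using D_le less_imp_le[OF D_pos] assms(6,7) by (intro suminf_powr_le_geometric) auto
  have "(\<integral>\<^sup>+\<omega>. ennreal (Z \<omega> powr q) \<partial>M) = (\<Sum>n. ennreal 1)"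
    unfolding Z_def using nn_integral_powr_step_function[OF D D_sets D_pos, of q q] \<open>0 < q\<close>
    by (simp add: D_pos[THEN less_imp_neq, THEN not_sym])
  also have "(\<Sum>n::nat. ennreal 1) = top"
    using summable_iff_suminf_neq_top[of "\<lambda>_. 1"] by (simp add: summable_const_iff)
  finally show "(\<integral>\<^sup>+\<omega>. ennreal (Z \<omega> powr q) \<partial>M) = top" .
qed

lemma nonatomic_exists_small_Lp_infinite_Lq:
  assumes "prob_space M" "nonatomic M" "F \<in> sets M" "0 < measure M F"
    and "0 < p" "p < q" "0 < \<eta>"
  obtains Z where "Z \<in> borel_measurable M" "\<And>\<omega>. 0 \<le> Z \<omega>" "\<And>\<omega>. Z \<omega> \<noteq> 0 \<Longrightarrow> \<omega> \<in> F \<and> L \<le> Z \<omega>"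
    "integrable M (\<lambda>\<omega>. Z \<omega> powr p)" "(\<integral>\<omega>. Z \<omega> powr p \<partial>M) < \<eta>"
    "(\<integral>\<^sup>+\<omega>. ennreal (Z \<omega> powr q) \<partial>M) = top"
proof -
  interpret prob_space M by fact
  define r where "r = 1 - p/q"
  have "0 < q" "0 < r" using assms(5,6) by (auto simp: r_def)
  define \<beta> :: real where "\<beta> = (1/2) powr r"
  have "\<beta> < 1" using \<open>0 < r\<close> powr_less_mono'[of "1/2::real" 0 r] by (simp add: \<beta>_def)
  define c where "c = min (max L 1 powr (-q)) ((\<eta> * (1 - \<beta>) / 2) powr (1/r))"
  have "0 < c" using assms(7) \<open>\<beta> < 1\<close> by (simp add: c_def)
  have "c powr r \<le> ((\<eta> * (1 - \<beta>) / 2) powr (1/r)) powr r"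
    using \<open>0 < c\<close> \<open>0 < r\<close> by (intro powr_mono2) (auto simp: c_def)
  also have "\<dots> = \<eta> * (1 - \<beta>) / 2"
    using \<open>0 < r\<close> assms(7) \<open>\<beta> < 1\<close> by (simp add: powr_powr)
  finally have c_small: "c powr r / (1 - \<beta>) \<le> \<eta> / 2" using \<open>\<beta> < 1\<close> by (simp add: field_simps)
  have "L \<le> (max L 1 powr (-q)) powr (-1/q)" using \<open>0 < q\<close> by (simp add: powr_powr)
  also have "\<dots> \<le> c powr (-1/q)" using \<open>0 < c\<close> \<open>0 < q\<close> by (intro powr_mono2') (auto simp: c_def)
  finally have L_le: "L \<le> c powr (-1/q)" .
  obtain D where D: "disjoint_family D" and D_sets: "\<And>n. D n \<in> sets M" and D_sub: "\<And>n. D n \<subseteq> F"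
    and D_pos: "\<And>n. 0 < measure M (D n)" and D_le: "\<And>n. measure M (D n) \<le> c * (1/2)^n"
    by (rule nonatomic_disjoint_family[OF finite_measure_axioms assms(2-4) \<open>0 < c\<close>]) blast
  define Z where "Z \<omega> = (\<Sum>n. measure M (D n) powr (-1/q) * indicator (D n) \<omega>)" for \<omega>
  note Z = step_function_small_Lp_infinite_Lq[OF D D_sets D_pos D_le assms(5,6), folded Z_def]
  have Z_p: "(\<integral>\<^sup>+\<omega>. ennreal (Z \<omega> powr p) \<partial>M) \<le> ennreal (\<eta> / 2)"
    using Z(4) ennreal_leI[OF c_small] unfolding r_def \<beta>_def by (rule order_trans)
  then have Z_integrable: "integrable M (\<lambda>\<omega>. Z \<omega> powr p)"
    using Z(1,2) by (intro integrableI_nonneg) (auto simp: le_less_trans)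
  have "ennreal (\<integral>\<omega>. Z \<omega> powr p \<partial>M) \<le> ennreal (\<eta> / 2)"
    using Z_p Z(2) nn_integral_eq_integral[OF Z_integrable] by simp
  then have "(\<integral>\<omega>. Z \<omega> powr p \<partial>M) < \<eta>" using assms(7) by simp
  moreover have "\<omega> \<in> F \<and> L \<le> Z \<omega>" if nonzero: "Z \<omega> \<noteq> 0" for \<omega>
  proof -
    obtain n where "\<omega> \<in> D n" "c powr (-1/q) \<le> Z \<omega>" using Z(3)[OF nonzero] by blast
    then show ?thesis using D_sub[of n] L_le by auto
  qed
  ultimately show thesis using Z(5) by (intro that[OF Z(1,2) _ Z_integrable])
qed

lemma Lp_tendsto_AE_subseq:
  assumes "0 < p" "\<And>n. memLp M p (X n)" "memLp M p Y"
    and "(\<lambda>n. Lp_norm M p (\<lambda>\<omega>. X n \<omega> - Y \<omega>)) \<longlonglongrightarrow> 0"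
  obtains s where "strict_mono s" "AE \<omega> in M. (\<lambda>n. X (s n) \<omega>) \<longlonglongrightarrow> Y \<omega>"
proof -
  have "integrable M (\<lambda>\<omega>. \<bar>X n \<omega> - Y \<omega>\<bar> powr p)" for n
    using memLp_diff[OF _ assms(2) assms(3)] assms(1) by (simp add: memLp_def)
  moreover have "(\<lambda>n. \<integral>\<omega>. norm (\<bar>X n \<omega> - Y \<omega>\<bar> powr p) \<partial>M) \<longlonglongrightarrow> 0"
    using assms(4) by (simp add: Lp_norm_tendsto_zero_iff[OF assms(1)])
  ultimately obtain s where s: "strict_mono s"
    and AE_powr: "AE \<omega> in M. (\<lambda>n. \<bar>X (s n) \<omega> - Y \<omega>\<bar> powr p) \<longlonglongrightarrow> 0"
    using tendsto_L1_AE_subseq[of M "\<lambda>n \<omega>. \<bar>X n \<omega> - Y \<omega>\<bar> powr p"] by blast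
  from AE_powr have "AE \<omega> in M. (\<lambda>n. X (s n) \<omega>) \<longlonglongrightarrow> Y \<omega>"
  proof eventually_elim
    fix \<omega> assume "(\<lambda>n. \<bar>X (s n) \<omega> - Y \<omega>\<bar> powr p) \<longlonglongrightarrow> 0"
    then have "(\<lambda>n. (\<bar>X (s n) \<omega> - Y \<omega>\<bar> powr p) powr (1/p)) \<longlonglongrightarrow> 0"
      by (rule tendsto_zero_powrI[where b="1/p"]) (use assms(1) in auto)
    then have "(\<lambda>n. X (s n) \<omega> - Y \<omega>) \<longlonglongrightarrow> 0"
      using assms(1) by (simp add: powr_powr tendsto_rabs_zero_iff)
    then show "(\<lambda>n. X (s n) \<omega>) \<longlonglongrightarrow> Y \<omega>" by (rule LIM_zero_cancel)
  qed
  with s show thesis by (rule that)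
qed

lemma nn_integral_minus_u_q_le_of_Lp_closure:
  assumes "prob_space M" "0 < p" "0 < q" "Y \<in> Lp_closure M p (A_u M q \<alpha>)"
  shows "(\<integral>\<^sup>+\<omega>. ennreal (- u_q q (Y \<omega>)) \<partial>M) \<le> ennreal (- \<alpha>)"
proof -
  interpret prob_space M by fact
  obtain X where X: "\<And>n. X n \<in> A_u M q \<alpha>" and Y: "memLp M p Y"
    and lim: "(\<lambda>n. Lp_norm M p (\<lambda>\<omega>. X n \<omega> - Y \<omega>)) \<longlonglongrightarrow> 0"
    using assms(4) unfolding Lp_closure_def by blast
  have X_Linf: "X n \<in> Linf M" for n using X by (simp add: A_u_def)
  have [measurable]: "Y \<in> borel_measurable M" "X n \<in> borel_measurable M" for n
    using Y X_Linf by (auto simp: memLp_def Linf_def)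
  obtain s where "strict_mono s" and conv: "AE \<omega> in M. (\<lambda>n. X (s n) \<omega>) \<longlonglongrightarrow> Y \<omega>"
    using Lp_tendsto_AE_subseq[OF assms(2) memLp_Linf[OF finite_measure_axioms X_Linf] Y lim] assms(2)
    by auto
  have loss_le: "(\<integral>\<^sup>+\<omega>. ennreal (- u_q q (X n \<omega>)) \<partial>M) \<le> ennreal (- \<alpha>)" for n
  proof -
    have "integrable M (\<lambda>\<omega>. u_q q (X n \<omega>))"
      using integrable_u_q_Linf[OF finite_measure_axioms X_Linf] assms(3) by simp
    then have "(\<integral>\<^sup>+\<omega>. ennreal (- u_q q (X n \<omega>)) \<partial>M) = ennreal (\<integral>\<omega>. - u_q q (X n \<omega>) \<partial>M)"
      by (intro nn_integral_eq_integral) (auto simp: u_q_nonpos)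
    also have "\<dots> \<le> ennreal (- \<alpha>)"
      using X[of n] by (intro ennreal_leI) (auto simp: A_u_def)
    finally show ?thesis .
  qed
  have "AE \<omega> in M. ennreal (- u_q q (Y \<omega>)) = liminf (\<lambda>n. ennreal (- u_q q (X (s n) \<omega>)))"
    using conv
  proof eventually_elim
    fix \<omega> assume "(\<lambda>n. X (s n) \<omega>) \<longlonglongrightarrow> Y \<omega>"
    then have "(\<lambda>n. ennreal (- u_q q (X (s n) \<omega>))) \<longlonglongrightarrow> ennreal (- u_q q (Y \<omega>))"
      by (intro tendsto_ennrealI tendsto_minus tendsto_u_q assms(3))
    then show "ennreal (- u_q q (Y \<omega>)) = liminf (\<lambda>n. ennreal (- u_q q (X (s n) \<omega>)))"
      by (simp add: lim_imp_Liminf)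
  qed
  then have "(\<integral>\<^sup>+\<omega>. ennreal (- u_q q (Y \<omega>)) \<partial>M)
      = (\<integral>\<^sup>+\<omega>. liminf (\<lambda>n. ennreal (- u_q q (X (s n) \<omega>))) \<partial>M)"
    by (rule nn_integral_cong_AE)
  also have "\<dots> \<le> liminf (\<lambda>n. \<integral>\<^sup>+\<omega>. ennreal (- u_q q (X (s n) \<omega>)) \<partial>M)"
    by (rule nn_integral_liminf) measurable
  also have "\<dots> \<le> ennreal (- \<alpha>)"
    by (rule Liminf_le) (auto intro: always_eventually loss_le)
  finally show ?thesis .
qed

lemma nn_integral_minus_u_q_eq_top:
  assumes [measurable]: "Z \<in> borel_measurable M"
    and "0 < q" "0 < c" "\<And>\<omega>. 0 \<le> Z \<omega>" "\<And>\<omega>. c * Z \<omega> \<le> max 0 (- Y \<omega>)"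
    and "(\<integral>\<^sup>+\<omega>. ennreal (Z \<omega> powr q) \<partial>M) = top"
  shows "(\<integral>\<^sup>+\<omega>. ennreal (- u_q q (Y \<omega>)) \<partial>M) = top"
proof -
  have "top = ennreal (c powr q) * (\<integral>\<^sup>+\<omega>. ennreal (Z \<omega> powr q) \<partial>M)"
    using assms(3,6) by (simp add: ennreal_mult_top)
  also have "\<dots> = (\<integral>\<^sup>+\<omega>. ennreal ((c * Z \<omega>) powr q) \<partial>M)"
    using assms(3,4) by (simp add: nn_integral_cmult ennreal_mult powr_mult)
  also have "\<dots> \<le> (\<integral>\<^sup>+\<omega>. ennreal (- u_q q (Y \<omega>)) \<partial>M)"
    unfolding minus_u_q_eq using assms(2-5)
    by (intro nn_integral_mono ennreal_leI powr_mono2) (auto intro: less_imp_le)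
  finally show ?thesis by (simp add: top_unique)
qed

lemma exists_sublevel_set_measure_pos:
  assumes "prob_space M" "X \<in> borel_measurable M"
  obtains N :: nat where "0 < measure M {\<omega> \<in> space M. X \<omega> \<le> real N}"
proof -
  interpret prob_space M by fact
  define G where "G N = {\<omega> \<in> space M. X \<omega> \<le> real N}" for N :: nat
  have "(\<lambda>N. measure M (G N)) \<longlonglongrightarrow> measure M (\<Union>N. G N)"
    using assms(2) by (intro finite_Lim_measure_incseq) (auto simp: G_def incseq_def)
  moreover have "(\<Union>N. G N) = space M"
    by (auto simp: G_def real_arch_simple)
  ultimately have "(\<lambda>N. measure M (G N)) \<longlonglongrightarrow> 1" by (simp add: prob_space)
  then have "\<forall>\<^sub>F N in sequentially. 0 < measure M (G N)" by (rule order_tendstoD(1)) simp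
  then show thesis using that by (auto simp: G_def eventually_sequentially)
qed

lemma not_Lp_interior_nonempty_A_u:
  assumes "prob_space M" "nonatomic M" "0 < p" "p < q"
  shows "\<not> Lp_interior_nonempty M p (Lp_closure M p (A_u M q \<alpha>))"
proof
  interpret prob_space M by fact
  assume "Lp_interior_nonempty M p (Lp_closure M p (A_u M q \<alpha>))"
  then obtain X \<epsilon> where X: "memLp M p X" and "0 < \<epsilon>"
    and ball: "\<And>Y. memLp M p Y \<Longrightarrow> Lp_norm M p (\<lambda>\<omega>. Y \<omega> - X \<omega>) < \<epsilon> \<Longrightarrow> Y \<in> Lp_closure M p (A_u M q \<alpha>)"
    unfolding Lp_interior_nonempty_def by blast
  have "0 < q" using assms(3,4) by simp
  have X_meas[measurable]: "X \<in> borel_measurable M" using X by (simp add: memLp_def)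
  obtain N :: nat where N: "0 < measure M {\<omega> \<in> space M. X \<omega> \<le> real N}"
    using exists_sublevel_set_measure_pos[OF assms(1) X_meas] by blast
  obtain Z where Z_meas[measurable]: "Z \<in> borel_measurable M" and Z_nonneg: "\<And>\<omega>. 0 \<le> Z \<omega>"
    and Z_support: "\<And>\<omega>. Z \<omega> \<noteq> 0 \<Longrightarrow> \<omega> \<in> {\<omega> \<in> space M. X \<omega> \<le> real N} \<and> 2 * real N \<le> Z \<omega>"
    and Z_p: "integrable M (\<lambda>\<omega>. Z \<omega> powr p)" "(\<integral>\<omega>. Z \<omega> powr p \<partial>M) < \<epsilon> powr p"
    and Z_q: "(\<integral>\<^sup>+\<omega>. ennreal (Z \<omega> powr q) \<partial>M) = top"
    using nonatomic_exists_small_Lp_infinite_Lq[OF assms(1,2) _ N assms(3,4),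
        where L = "2 * real N" and \<eta> = "\<epsilon> powr p"] \<open>0 < \<epsilon>\<close>
    by auto
  define Y where "Y \<omega> = X \<omega> - Z \<omega>" for \<omega>
  have "memLp M p Z" using Z_p Z_nonneg by (simp add: memLp_def)
  then have "memLp M p Y" unfolding Y_def using memLp_diff[OF _ X] assms(3) by simp
  moreover have "Lp_norm M p (\<lambda>\<omega>. Y \<omega> - X \<omega>) < \<epsilon>"
    using Z_p Z_nonneg by (simp add: Y_def Lp_norm_less_iff[OF assms(3) \<open>0 < \<epsilon>\<close>])
  ultimately have "Y \<in> Lp_closure M p (A_u M q \<alpha>)" by (rule ball)
  then have loss_bounded: "(\<integral>\<^sup>+\<omega>. ennreal (- u_q q (Y \<omega>)) \<partial>M) \<le> ennreal (- \<alpha>)"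
    by (rule nn_integral_minus_u_q_le_of_Lp_closure[OF assms(1,3) \<open>0 < q\<close>])
  have half_Z_le: "1/2 * Z \<omega> \<le> max 0 (- Y \<omega>)" for \<omega>
    using Z_support[of \<omega>] Z_nonneg[of \<omega>] by (cases "Z \<omega> = 0") (auto simp: Y_def)
  have loss_infinite: "(\<integral>\<^sup>+\<omega>. ennreal (- u_q q (Y \<omega>)) \<partial>M) = top"
    by (rule nn_integral_minus_u_q_eq_top[OF Z_meas \<open>0 < q\<close> _ Z_nonneg half_Z_le Z_q]) simp
  show False using loss_bounded loss_infinite by (simp add: top_unique)
qed

lemma index_set_A_u_ge:
  assumes "prob_space M" "nonatomic M" "p \<in> index_set M (A_u M q \<alpha>)"
  shows "q \<le> p"
  using not_Lp_interior_nonempty_A_u[OF assms(1,2), of p q \<alpha>] assms(3)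
  by (force simp: index_set_def)

theorem corollary6p8:
  fixes M :: "'a measure" and q \<alpha> S0 :: real and ST :: "'a \<Rightarrow> real"
  assumes "prob_space M" and "nonatomic M"
    and "1 \<le> q" and "\<alpha> < 0"
    and "traded_asset M S0 ST" and "ST \<in> Linf M"
    and "rho_finite M (A_u M q \<alpha>) S0 ST"
  shows "index_fin M (A_u M q \<alpha>) = ereal q \<and> q \<in> index_set M (A_u M q \<alpha>)"
  \<comment> \<open>The index depends on the acceptance set alone.\<close>
proof
  show q_mem: "q \<in> index_set M (A_u M q \<alpha>)"
    by (rule index_set_A_u_mem[OF assms(1,3,4)])
  show "index_fin M (A_u M q \<alpha>) = ereal q"
    unfolding index_fin_def
    by (rule Inf_eqI) (use q_mem index_set_A_u_ge[OF assms(1,2)] in auto)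
qed

end
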